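(* For all $q\in Q$, $p''(q)$ and $r''(\overline p(q))$ have the same sign.
   Context: Let $0<q_\ell<q_h<\infty$, $Q=[q_\ell,q_h]$, and let $c$ be a real number with $0<c<q_\ell$. Let $F$ be a probability distribution on $[0,1]$ with support $[0,1]$ admitting a twice continuously differentiable density $f:(0,1)\to\mathbb{R}_{>0}$. Define $r(v)=(1-F(v))/f(v)$ and $\psi(v)=v-r(v)$ on $(0,1)$, and assume $\psi'(v)>0$ whenever $\psi(v)>0$. For $q\in Q$, $p(q)$ is the unique maximizer over $p\in\mathbb{R}$ of $(p-c)\big(1-F(p/q)\big)$, and $\overline p(q)=p(q)/q$. *)

theory Defs
  imports "HOL-Analysis.Analysis"
begin

definition hazr :: "(real \<Rightarrow> real) \<Rightarrow> (real \<Rightarrow> real) \<Rightarrow> real \<Rightarrow> real" where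
  "hazr F f v = (1 - F v) / f v"

definition virt :: "(real \<Rightarrow> real) \<Rightarrow> (real \<Rightarrow> real) \<Rightarrow> real \<Rightarrow> real" where
  "virt F f v = v - hazr F f v"

definition profit :: "(real \<Rightarrow> real) \<Rightarrow> real \<Rightarrow> real \<Rightarrow> real \<Rightarrow> real" where
  "profit F c q p = (p - c) * (1 - F (p / q))"

definition opt_price :: "(real \<Rightarrow> real) \<Rightarrow> real \<Rightarrow> real \<Rightarrow> real" where
  "opt_price F c q = (THE p. \<forall>p'. profit F c q p' \<le> profit F c q p)"

definition opt_price_bar :: "(real \<Rightarrow> real) \<Rightarrow> real \<Rightarrow> real \<Rightarrow> real" where
  "opt_price_bar F c q = opt_price F c q / q"

end

theory Submission
  imports Defs
begin

(* The first-order condition for the profit (p - c)(1 - F(p/q)) reads psi(p/q) = c/q, and psi is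
   injective where it is positive, so pbar(q) = psi^-1(c/q) and p(q) = q psi^-1(c/q).
   Differentiating twice, with (psi^-1)' = 1 / (1 - r'(pbar)), gives
     p''(q) = c^2 r''(pbar) / (q^3 (1 - r'(pbar))^3),
   and 1 - r'(pbar) = psi'(pbar) > 0 because psi(pbar) = c/q > 0. *)

lemma deriv_has_real_derivative_eventually:
  fixes h h' :: "real \<Rightarrow> real"
  assumes "\<forall>\<^sub>F x in nhds a. (h has_real_derivative h' x) (at x)"
    and "(h' has_real_derivative D) (at a)"
  shows "(deriv h has_real_derivative D) (at a)"
proof -
  have "\<forall>\<^sub>F x in nhds a. deriv h x = h' x"
    using assms(1) by eventually_elim (rule DERIV_imp_deriv)
  then show ?thesis
    using assms(2) DERIV_cong_ev by blast
qed

lemma DERIV_pos_where_pos_imp_increasing: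
  fixes g g' :: "real \<Rightarrow> real"
  assumes deriv: "\<And>x. x \<in> {a<..<b} \<Longrightarrow> (g has_real_derivative g' x) (at x)"
    and deriv_pos: "\<And>x. x \<in> {a<..<b} \<Longrightarrow> 0 < g x \<Longrightarrow> 0 < g' x"
    and "a < x" "x < y" "y < b" and pos: "0 < g x"
  shows "g x < g y"
proof (rule ccontr)
  \<comment> \<open>A maximum of g on [x, y] above g x would be interior, where g' = 0 contradicts g' > 0.\<close>
  assume not_less: "\<not> g x < g y"
  have "continuous_on {x..y} g"
    using assms(3-5) by (intro continuous_at_imp_continuous_on ballI DERIV_isCont[OF deriv]) auto
  then obtain m where m: "m \<in> {x..y}" and max: "\<forall>z\<in>{x..y}. g z \<le> g m"
    using continuous_attains_sup[of "{x..y}" g] \<open>x < y\<close> by auto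
  have x: "x \<in> {a<..<b}"
    using assms(3-5) by simp
  obtain d where "d > 0" and d: "\<forall>h>0. h < d \<longrightarrow> g x < g (x + h)"
    using DERIV_pos_inc_right[OF deriv[OF x] deriv_pos[OF x pos]] by blast
  have "g x < g (x + min (d/2) (y - x))"
    using d \<open>d > 0\<close> \<open>x < y\<close> by auto
  also have "\<dots> \<le> g m"
    using max \<open>d > 0\<close> \<open>x < y\<close> by auto
  finally have "g x < g m" .
  with not_less m have m_inner: "x < m" "m < y"
    by (auto simp: order.order_iff_strict)
  have "g' m = 0"
  proof (rule DERIV_local_max[OF deriv])
    show "\<forall>z. \<bar>m - z\<bar> < min (m - x) (y - m) \<longrightarrow> g z \<le> g m"
      using max by (auto simp: abs_if split: if_splits)
  qed (use m_inner assms(3-5) in auto)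
  moreover have "0 < g' m"
    using deriv_pos m_inner assms(3-5) pos \<open>g x < g m\<close> by auto
  ultimately show False
    by simp
qed

locale monopoly_pricing =
  fixes F f :: "real \<Rightarrow> real" and c :: real
  assumes cost_pos: "0 < c"
    and cdf_nonpos: "\<And>v. v \<le> 0 \<Longrightarrow> F v = 0"
    and cdf_ge_one: "\<And>v. 1 \<le> v \<Longrightarrow> F v = 1"
    and cdf_cont: "continuous_on UNIV F"
    and cdf_deriv: "\<And>v. v \<in> {0<..<1} \<Longrightarrow> (F has_real_derivative f v) (at v)"
    and density_pos: "\<And>v. v \<in> {0<..<1} \<Longrightarrow> 0 < f v"
    and density_differentiable: "\<And>v. v \<in> {0<..<1} \<Longrightarrow> f differentiable (at v)"
    and density_deriv_differentiable: "\<And>v. v \<in> {0<..<1} \<Longrightarrow> deriv f differentiable (at v)"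
    and deriv_virt_pos: "\<And>v. v \<in> {0<..<1} \<Longrightarrow> 0 < virt F f v \<Longrightarrow> 0 < deriv (virt F f) v"
begin

lemma cdf_less_one:
  assumes "v < 1"
  shows "F v < 1"
proof (cases "v \<le> 0")
  case True
  then show ?thesis
    using cdf_nonpos by simp
next
  case False
  have "F v < F 1"
  proof (rule DERIV_pos_imp_increasing_open[OF \<open>v < 1\<close>])
    show "\<exists>y. (F has_real_derivative y) (at x) \<and> 0 < y" if "v < x" "x < 1" for x
      using cdf_deriv density_pos that False by (intro exI[of _ "f x"]) auto
    show "continuous_on {v..1} F"
      using cdf_cont continuous_on_subset by blast
  qed
  then show ?thesis
    using cdf_ge_one by simp
qed

lemma cdf_le_one: "F v \<le> 1"
  using cdf_less_one[of v] cdf_ge_one[of v] by linarith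

lemma hazr_twice_differentiable:
  assumes v: "v \<in> {0<..<1}"
  shows "(hazr F f has_real_derivative deriv (hazr F f) v) (at v)"
    and "(deriv (hazr F f) has_real_derivative deriv (deriv (hazr F f)) v) (at v)"
proof -
  define r' where "r' = (\<lambda>w. (- f w * f w - (1 - F w) * deriv f w) / (f w)\<^sup>2)"
  have r': "(hazr F f has_real_derivative r' w) (at w)" if "w \<in> {0<..<1}" for w
  proof -
    have "(f has_real_derivative deriv f w) (at w)"
      using density_differentiable[OF that] by (simp add: DERIV_deriv_iff_real_differentiable)
    then show ?thesis
      unfolding hazr_def[abs_def] r'_def using cdf_deriv[OF that] density_pos[OF that]
      by (auto intro!: derivative_eq_intros simp: power2_eq_square)
  qed
  then show "(hazr F f has_real_derivative deriv (hazr F f) v) (at v)"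
    using r'[OF v] DERIV_imp_deriv by metis
  have "F differentiable (at v)"
    using cdf_deriv[OF v] real_differentiable_def by blast
  then have "r' differentiable (at v)"
    unfolding r'_def
    using density_pos[OF v] density_differentiable[OF v] density_deriv_differentiable[OF v]
    by (auto intro: derivative_intros)
  then have "(r' has_real_derivative deriv r' v) (at v)"
    by (simp add: DERIV_deriv_iff_real_differentiable)
  moreover have "\<forall>\<^sub>F w in nhds v. (hazr F f has_real_derivative r' w) (at w)"
    using eventually_nhds_in_open[of "{0<..<1}" v] v by (auto elim!: eventually_mono intro: r')
  ultimately have "(deriv (hazr F f) has_real_derivative deriv r' v) (at v)"
    by (intro deriv_has_real_derivative_eventually)
  then show "(deriv (hazr F f) has_real_derivative deriv (deriv (hazr F f)) v) (at v)"
    using DERIV_imp_deriv by metis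
qed

lemma virt_has_real_derivative:
  "v \<in> {0<..<1} \<Longrightarrow> (virt F f has_real_derivative 1 - deriv (hazr F f) v) (at v)"
  unfolding virt_def[abs_def]
  by (auto intro!: derivative_eq_intros hazr_twice_differentiable(1))

lemma deriv_hazr_less_one:
  "v \<in> {0<..<1} \<Longrightarrow> 0 < virt F f v \<Longrightarrow> deriv (hazr F f) v < 1"
  using deriv_virt_pos DERIV_imp_deriv[OF virt_has_real_derivative] by fastforce

lemma virt_strict_mono:
  "0 < v \<Longrightarrow> v < w \<Longrightarrow> w < 1 \<Longrightarrow> 0 < virt F f v \<Longrightarrow> virt F f v < virt F f w"
  by (rule DERIV_pos_where_pos_imp_increasing[OF virt_has_real_derivative, where a = 0 and b = 1])
    (use deriv_hazr_less_one in auto)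

abbreviation pos_virt :: "real set" where
  "pos_virt \<equiv> {v \<in> {0<..<1}. 0 < virt F f v}"

lemma inj_on_virt: "inj_on (virt F f) pos_virt"
  by (rule inj_onI, rule ccontr) (auto simp: neq_iff dest: virt_strict_mono)

lemma profit_pos: "c < p \<Longrightarrow> p < q \<Longrightarrow> 0 < profit F c q p"
  using cdf_less_one[of "p / q"] cost_pos by (simp add: profit_def)

lemma profit_nonpos:
  assumes "c < q" and "p \<le> c \<or> q \<le> p"
  shows "profit F c q p \<le> 0"
  using assms(2)
proof
  assume "p \<le> c"
  then show ?thesis
    using cdf_le_one[of "p / q"] by (simp add: profit_def mult_nonpos_nonneg)
next
  assume "q \<le> p"
  then have "1 \<le> p / q"
    using assms(1) cost_pos by simp
  then show ?thesis
    using cdf_ge_one by (simp add: profit_def)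
qed

lemma profit_has_max:
  assumes "c < q"
  shows "\<exists>p. \<forall>p'. profit F c q p' \<le> profit F c q p"
proof -
  have "continuous_on UNIV (\<lambda>p. F (p / q))"
    using assms cost_pos
    by (intro continuous_on_compose2[OF cdf_cont] continuous_intros) auto
  then have "continuous_on {c..q} (profit F c q)"
    unfolding profit_def[abs_def] by (intro continuous_intros) (auto intro: continuous_on_subset)
  then obtain p where "p \<in> {c..q}" and max: "\<forall>p'\<in>{c..q}. profit F c q p' \<le> profit F c q p"
    using continuous_attains_sup[of "{c..q}" "profit F c q"] assms by auto
  have "0 < profit F c q p"
    using max[rule_format, of "(c + q) / 2"] profit_pos[of "(c + q) / 2" q] assms by simp
  then have "profit F c q p' \<le> profit F c q p" for p'
    using max profit_nonpos[OF assms, of p'] by (cases "p' \<le> c \<or> q \<le> p'") auto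
  then show ?thesis
    by blast
qed

lemma profit_max_first_order:
  assumes "c < q" and max: "\<forall>p'. profit F c q p' \<le> profit F c q p"
  shows "c < p" and "p < q" and "virt F f (p / q) = c / q"
proof -
  have "0 < profit F c q p"
    using max[rule_format, of "(c + q) / 2"] profit_pos[of "(c + q) / 2" q] assms(1) by simp
  then have "\<not> (p \<le> c \<or> q \<le> p)"
    using profit_nonpos[OF assms(1), of p] by linarith
  then show "c < p" and "p < q"
    by auto
  define v where "v = p / q"
  have q: "0 < q"
    using assms(1) cost_pos by simp
  have v: "v \<in> {0<..<1}"
    using \<open>c < p\<close> \<open>p < q\<close> cost_pos q by (simp add: v_def field_simps)
  have "((\<lambda>p. p / q) has_real_derivative 1 / q) (at p)"
    using q by (auto intro!: derivative_eq_intros)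
  from DERIV_chain2[of F "f v" "\<lambda>p. p / q", OF _ this] cdf_deriv[OF v]
  have "((\<lambda>p. F (p / q)) has_real_derivative f v * (1 / q)) (at p)"
    by (simp add: v_def)
  then have "(profit F c q has_real_derivative (1 - F v) - (p - c) * (f v / q)) (at p)"
    unfolding profit_def[abs_def] v_def by (auto intro!: derivative_eq_intros)
  then have "(1 - F v) - (p - c) * (f v / q) = 0"
    by (rule DERIV_local_max[where d = 1]) (use max in auto)
  then have "hazr F f v = (p - c) / q"
    using density_pos[OF v] q by (simp add: hazr_def field_simps)
  then show "virt F f (p / q) = c / q"
    using q by (simp add: virt_def v_def diff_divide_distrib)
qed

lemma opt_price_is_max:
  assumes "c < q"
  shows "\<forall>p'. profit F c q p' \<le> profit F c q (opt_price F c q)"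
proof -
  have "p1 = p2" if "\<forall>p'. profit F c q p' \<le> profit F c q p1"
    and "\<forall>p'. profit F c q p' \<le> profit F c q p2" for p1 p2
  proof -
    note foc1 = profit_max_first_order[OF assms that(1)]
      and foc2 = profit_max_first_order[OF assms that(2)]
    have "p1 / q = p2 / q"
    proof (rule inj_onD[OF inj_on_virt])
      show "p1 / q \<in> pos_virt" "p2 / q \<in> pos_virt"
        using foc1 foc2 assms cost_pos by auto
    qed (simp add: foc1(3) foc2(3))
    then show ?thesis
      using assms cost_pos by simp
  qed
  then have "\<exists>!p. \<forall>p'. profit F c q p' \<le> profit F c q p"
    using profit_has_max[OF assms] by blast
  then show ?thesis
    unfolding opt_price_def by (rule theI')
qed

lemma opt_price_bar_in_pos_virt:
  assumes "c < q"
  shows "opt_price_bar F c q \<in> pos_virt" and "virt F f (opt_price_bar F c q) = c / q"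
  using profit_max_first_order[OF assms opt_price_is_max[OF assms]] assms cost_pos
  by (auto simp: opt_price_bar_def)

definition virt_inv :: "real \<Rightarrow> real" where
  "virt_inv = inv_into pos_virt (virt F f)"

lemma virt_inv_virt: "v \<in> pos_virt \<Longrightarrow> virt_inv (virt F f v) = v"
  unfolding virt_inv_def by (rule inv_into_f_f[OF inj_on_virt])

lemma virt_virt_inv:
  assumes "y \<in> {0<..<1}"
  shows "virt_inv y \<in> pos_virt \<and> virt F f (virt_inv y) = y"
proof -
  \<comment> \<open>The preimage of y is the optimal relative price at quality c / y.\<close>
  have "c < c / y"
    using assms cost_pos by (simp add: field_simps)
  moreover have "c / (c / y) = y"
    using assms cost_pos by simp
  ultimately have "y \<in> virt F f ` pos_virt"
    using opt_price_bar_in_pos_virt[of "c / y"] by (intro image_eqI[of _ _ "opt_price_bar F c (c / y)"]) auto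
  from inv_into_into[OF this] f_inv_into_f[OF this] show ?thesis
    unfolding virt_inv_def by blast
qed

lemma opt_price_bar_eq_virt_inv: "c < q \<Longrightarrow> opt_price_bar F c q = virt_inv (c / q)"
  using virt_inv_virt opt_price_bar_in_pos_virt by metis

lemma isCont_virt_inv:
  assumes "y \<in> {0<..<1}"
  shows "isCont virt_inv y"
proof -
  have "continuous_on {0<..<1} (virt F f)"
    by (intro continuous_at_imp_continuous_on ballI DERIV_isCont[OF virt_has_real_derivative])
  then have "open ({0<..<1} \<inter> virt F f -` {0<..})"
    by (intro continuous_open_preimage) auto
  moreover have "{0<..<1} \<inter> virt F f -` {0<..} = pos_virt"
    by auto
  ultimately have "open pos_virt"
    by simp
  moreover have "virt_inv y \<in> pos_virt"
    using virt_virt_inv[OF assms] by blast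
  ultimately obtain e where "e > 0" and e: "cball (virt_inv y) e \<subseteq> pos_virt"
    unfolding open_contains_cball by blast
  have "isCont virt_inv (virt F f (virt_inv y))"
  proof (rule isCont_inverse_function[where f = "virt F f" and x = "virt_inv y", OF \<open>e > 0\<close>])
    fix z
    assume "\<bar>z - virt_inv y\<bar> \<le> e"
    then have "z \<in> pos_virt"
      using e by (auto simp: dist_real_def abs_minus_commute)
    then show "virt_inv (virt F f z) = z" and "isCont (virt F f) z"
      using virt_inv_virt DERIV_isCont[OF virt_has_real_derivative] by auto
  qed
  then show ?thesis
    using virt_virt_inv[OF assms] by simp
qed

lemma virt_inv_has_real_derivative:
  assumes "y \<in> {0<..<1}"
  shows "(virt_inv has_real_derivative 1 / (1 - deriv (hazr F f) (virt_inv y))) (at y)"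
proof -
  have "deriv (hazr F f) (virt_inv y) < 1"
    using deriv_hazr_less_one virt_virt_inv[OF assms] by simp
  then have "(virt_inv has_real_derivative inverse (1 - deriv (hazr F f) (virt_inv y))) (at y)"
    by (intro DERIV_inverse_function[where f = "virt F f" and a = 0 and b = 1])
      (use assms virt_virt_inv virt_has_real_derivative isCont_virt_inv in auto)
  then show ?thesis
    by (simp add: inverse_eq_divide)
qed

lemma opt_price_has_real_derivative:
  assumes "c < q"
  shows "(opt_price F c has_real_derivative
          virt_inv (c / q) - (c / q) / (1 - deriv (hazr F f) (virt_inv (c / q)))) (at q)"
proof -
  define D where "D = 1 - deriv (hazr F f) (virt_inv (c / q))"
  have q: "0 < q"
    using assms cost_pos by simp
  have u: "c / q \<in> {0<..<1}"
    using assms cost_pos by (simp add: field_simps)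
  have "((\<lambda>x. c / x) has_real_derivative - c / q\<^sup>2) (at q)"
    using q by (auto intro!: derivative_eq_intros simp: power2_eq_square)
  from DERIV_chain2[of virt_inv _ "\<lambda>x. c / x", OF virt_inv_has_real_derivative[OF u] this]
  have "((\<lambda>x. x * virt_inv (c / x)) has_real_derivative
          1 * virt_inv (c / q) + 1 / D * (- c / q\<^sup>2) * q) (at q)"
    unfolding D_def by (rule DERIV_mult[OF DERIV_ident])
  moreover have "1 * virt_inv (c / q) + 1 / D * (- c / q\<^sup>2) * q = virt_inv (c / q) - (c / q) / D"
    using q by (simp add: power2_eq_square)
  moreover have "\<forall>\<^sub>F x in nhds q. x * virt_inv (c / x) = opt_price F c x"
    using eventually_nhds_in_open[of "{c<..}" q] assms cost_pos
    by (auto elim!: eventually_mono simp: opt_price_bar_def opt_price_bar_eq_virt_inv[symmetric])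
  ultimately show ?thesis
    unfolding D_def using DERIV_cong_ev by fastforce
qed

lemma opt_price_slope_has_real_derivative:
  assumes u: "u \<in> {0<..<1}"
  shows "((\<lambda>u. virt_inv u - u / (1 - deriv (hazr F f) (virt_inv u))) has_real_derivative
          - u * deriv (deriv (hazr F f)) (virt_inv u) / (1 - deriv (hazr F f) (virt_inv u)) ^ 3) (at u)"
proof -
  define D where "D = (\<lambda>u. 1 - deriv (hazr F f) (virt_inv u))"
  define r'' where "r'' = deriv (deriv (hazr F f)) (virt_inv u)"
  have "0 < D u"
    using deriv_hazr_less_one virt_virt_inv[OF u] by (simp add: D_def)
  have W: "(virt_inv has_real_derivative 1 / D u) (at u)"
    using virt_inv_has_real_derivative[OF u] by (simp add: D_def)
  have "(deriv (hazr F f) has_real_derivative r'') (at (virt_inv u))"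
    using hazr_twice_differentiable(2) virt_virt_inv[OF u] by (simp add: r''_def)
  from DERIV_chain2[OF this W]
  have "(D has_real_derivative 0 - r'' * (1 / D u)) (at u)"
    unfolding D_def by (rule DERIV_diff[OF DERIV_const])
  from DERIV_diff[OF W DERIV_divide[OF DERIV_ident this]]
  have "((\<lambda>u. virt_inv u - u / D u) has_real_derivative
          1 / D u - (1 * D u - u * (0 - r'' * (1 / D u))) / (D u * D u)) (at u)"
    using \<open>0 < D u\<close> by simp
  moreover have "1 / D u - (1 * D u - u * (0 - r'' * (1 / D u))) / (D u * D u) = - u * r'' / D u ^ 3"
    using \<open>0 < D u\<close> by (simp add: field_simps power3_eq_cube)
  ultimately show ?thesis
    by (simp add: D_def r''_def)
qed

lemma deriv2_opt_price:
  assumes "c < q"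
  shows "deriv (deriv (opt_price F c)) q =
    c\<^sup>2 / (q ^ 3 * (1 - deriv (hazr F f) (opt_price_bar F c q)) ^ 3)
      * deriv (deriv (hazr F f)) (opt_price_bar F c q)"
proof -
  define G where "G = (\<lambda>u. virt_inv u - u / (1 - deriv (hazr F f) (virt_inv u)))"
  have q: "0 < q"
    using assms cost_pos by simp
  have u: "c / q \<in> {0<..<1}"
    using assms cost_pos by (simp add: field_simps)
  have "(opt_price F c has_real_derivative G (c / x)) (at x)" if "c < x" for x
    unfolding G_def using that by (rule opt_price_has_real_derivative)
  then have "\<forall>\<^sub>F x in nhds q. (opt_price F c has_real_derivative G (c / x)) (at x)"
    using eventually_nhds_in_open[of "{c<..}" q] assms by (auto elim!: eventually_mono)
  moreover have "((\<lambda>x. c / x) has_real_derivative - c / q\<^sup>2) (at q)"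
    using q by (auto intro!: derivative_eq_intros simp: power2_eq_square)
  note DERIV_chain2[of G _ "\<lambda>x. c / x", OF opt_price_slope_has_real_derivative[OF u, folded G_def] this]
  ultimately have "(deriv (opt_price F c) has_real_derivative
      - (c / q) * deriv (deriv (hazr F f)) (virt_inv (c / q))
        / (1 - deriv (hazr F f) (virt_inv (c / q))) ^ 3 * (- c / q\<^sup>2)) (at q)"
    by (rule deriv_has_real_derivative_eventually)
  then show ?thesis
    using q assms
    by (simp add: DERIV_imp_deriv opt_price_bar_eq_virt_inv power2_eq_square power3_eq_cube mult_ac)
qed

end

theorem lemma9:
  fixes F f :: "real \<Rightarrow> real" and c q_l q_h :: real
  assumes "0 < q_l" and "q_l < q_h" and "0 < c" and "c < q_l"
    and F_low: "\<forall>v\<le>0. F v = 0" and F_high: "\<forall>v\<ge>1. F v = 1"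
    and F_cont: "continuous_on UNIV F"
    and F_dens: "\<forall>v\<in>{0<..<1}. (F has_real_derivative f v) (at v)"
    and f_pos: "\<forall>v\<in>{0<..<1}. f v > 0"
    and f_C2: "\<forall>v\<in>{0<..<1}. f differentiable (at v) \<and> deriv f differentiable (at v)"
    and f_C2_cont: "continuous_on {0<..<1} (deriv (deriv f))"
    and psi_mono: "\<forall>v\<in>{0<..<1}. virt F f v > 0 \<longrightarrow> deriv (virt F f) v > 0"
    and q: "q \<in> {q_l..q_h}"
  shows "sgn (deriv (deriv (opt_price F c)) q)
         = sgn (deriv (deriv (hazr F f)) (opt_price_bar F c q))"
proof -
  interpret monopoly_pricing F f c
    using assms by unfold_locales auto
  have "c < q"
    using q \<open>c < q_l\<close> by simp
  then have "0 < 1 - deriv (hazr F f) (opt_price_bar F c q)"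
    using deriv_hazr_less_one opt_price_bar_in_pos_virt by simp
  with \<open>c < q\<close> \<open>0 < c\<close> show ?thesis
    by (simp add: deriv2_opt_price sgn_mult)
qed

end
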